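(* Let $p$ be a prime, $1\le e<p$, and define $f_n\in\mathbb{F}_p[c]$ by $f_1=c$ and $f_{n+1}=c^{p^n}-f_n^e$ for $n\ge1$. Then for all sufficiently large $n$ there is a nonzero prime ideal $\mathfrak{p}\subseteq\mathbb{F}_p[c]$ with $f_n\in\mathfrak{p}$ but $f_j\notin\mathfrak{p}$ for all $1\le j<n$. *)

theory Defs
  imports "Berlekamp_Zassenhaus.Finite_Field" "HOL-Computational_Algebra.Polynomial"
begin

text \<open>F_p is the type 'p mod_ring with CARD('p) prime; F_p[c] is ('p mod_ring) poly.
  The sequence is indexed from 1; the value at index 0 is an irrelevant filler.\<close>

fun fseq :: "nat \<Rightarrow> nat \<Rightarrow> 'p::prime_card mod_ring poly" where
  "fseq e 0 = 0"
| "fseq e (Suc 0) = [:0, 1:]"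
| "fseq e (Suc (Suc n)) = monom 1 (CARD('p) ^ Suc n) - (fseq e (Suc n)) ^ e"

definition is_ideal :: "'a::comm_ring_1 set \<Rightarrow> bool" where
  "is_ideal I \<longleftrightarrow> 0 \<in> I \<and> (\<forall>x\<in>I. \<forall>y\<in>I. x + y \<in> I) \<and> (\<forall>r x. x \<in> I \<longrightarrow> r * x \<in> I)"

definition is_prime_ideal :: "'a::comm_ring_1 set \<Rightarrow> bool" where
  "is_prime_ideal P \<longleftrightarrow> is_ideal P \<and> P \<noteq> UNIV \<and> (\<forall>a b. a * b \<in> P \<longrightarrow> a \<in> P \<or> b \<in> P)"

end

theory Submission
  imports Defs
begin

text \<open>
  Since p^m vanishes in F_p, the derivative of f_(m+1) is (-e)^m (f_1 \<cdots> f_m)^(e-1).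
  So for h = f_1 \<cdots> f_m the product h f_(m+1)' is a nonzero multiple of h^e, of degree
  e (1 + p + \<dots> + p^(m-1)) < p^m = deg f_(m+1). If every prime factor of f_(m+1) divided h,
  then f_(m+1) would divide h f_(m+1)', because a prime occurring to the power k in a
  polynomial occurs at least to the power k - 1 in its derivative. Hence some prime factor of
  f_(m+1) divides none of f_1, \<dots>, f_m and generates the required prime ideal; in fact
  every n \<ge> 1 works.
\<close>

lemma power_dvd_pderiv:
  fixes q g :: "'a::idom poly"
  assumes "q ^ k dvd g"
  shows "q ^ (k - 1) dvd pderiv g"
proof -
  obtain r where g: "g = q ^ k * r" using assms by blast
  have "pderiv g = q ^ k * pderiv r + r * smult (of_nat k) (q ^ (k - 1) * pderiv q)"
    by (simp add: g pderiv_mult pderiv_power)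
  moreover have "q ^ (k - 1) dvd q ^ k" by (simp add: le_imp_power_dvd)
  ultimately show ?thesis by (simp add: dvd_mult2 dvd_smult)
qed

lemma dvd_mult_pderiv_if_prime_factors_dvd:
  fixes g h :: "'a::{factorial_ring_gcd, semiring_gcd_mult_normalize} poly"
  assumes "g \<noteq> 0" and prime_factors: "\<And>q. prime q \<Longrightarrow> q dvd g \<Longrightarrow> q dvd h"
  shows "g dvd h * pderiv g"
proof (cases "h * pderiv g = 0")
  case False
  then have h: "h \<noteq> 0" and g': "pderiv g \<noteq> 0" by auto
  show ?thesis
  proof (rule multiplicity_le_imp_dvd[OF \<open>g \<noteq> 0\<close>])
    fix q :: "'a poly" assume q: "prime q"
    then have not_unit: "\<not> is_unit q" by (simp add: prime_elem_not_unit)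
    show "multiplicity q g \<le> multiplicity q (h * pderiv g)"
    proof (cases "multiplicity q g = 0")
      case False
      then have "q dvd h" using prime_factors[OF q] multiplicity_dvd'[of 1 q g] by simp
      then have "multiplicity q h \<ge> 1" using multiplicity_geI[OF h not_unit, of 1] by simp
      moreover have "multiplicity q (pderiv g) \<ge> multiplicity q g - 1"
        by (rule multiplicity_geI[OF g' not_unit]) (rule power_dvd_pderiv[OF multiplicity_dvd])
      moreover have "multiplicity q (h * pderiv g) = multiplicity q h + multiplicity q (pderiv g)"
        using q h g' by (simp add: prime_elem_multiplicity_mult_distrib)
      ultimately show ?thesis by linarith
    qed simp
  qed
qed auto

lemma is_prime_ideal_multiples:
  fixes q :: "'a::comm_ring_1"
  assumes "prime_elem q"
  shows "is_prime_ideal {x. q dvd x}"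
  using assms prime_elem_not_unit[OF assms]
  unfolding is_prime_ideal_def is_ideal_def by (auto simp: prime_elem_dvd_mult_iff)

lemma geometric_sum_mult_less_power:
  fixes p e m :: nat
  assumes "e < p"
  shows "e * (\<Sum>i<m. p ^ i) < p ^ m"
proof -
  have "(p - 1) * (\<Sum>i<m. p ^ i) + 1 = p ^ m"
  proof (induction m)
    case (Suc m)
    have "(p - 1) * (\<Sum>i<Suc m. p ^ i) + 1 = ((p - 1) * (\<Sum>i<m. p ^ i) + 1) + (p - 1) * p ^ m"
      by (simp add: algebra_simps)
    also have "\<dots> = p ^ Suc m" using Suc assms by (cases p) (auto simp: algebra_simps)
    finally show ?case .
  qed simp
  moreover have "e * (\<Sum>i<m. p ^ i) \<le> (p - 1) * (\<Sum>i<m. p ^ i)"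
    using assms by (intro mult_right_mono) auto
  ultimately show ?thesis by linarith
qed

lemma fseq_nonzero_degree:
  assumes "e < CARD('p::prime_card)"
  shows "(fseq e (Suc m) :: 'p mod_ring poly) \<noteq> 0 \<and>
         degree (fseq e (Suc m) :: 'p mod_ring poly) = CARD('p) ^ m"
proof (induction m)
  case (Suc m)
  let ?p = "CARD('p)" and ?f = "fseq e (Suc m) :: 'p mod_ring poly"
  have "degree (?f ^ e) = e * ?p ^ m" using Suc by (simp add: degree_power_eq)
  also have "\<dots> < ?p ^ Suc m" using assms by simp
  finally have "degree (monom 1 (?p ^ Suc m) - ?f ^ e) = ?p ^ Suc m"
    using degree_add_eq_left[of "- (?f ^ e)"] by (simp add: degree_monom_eq)
  moreover have "?p > 1" using prime_card[where 'a='p] prime_gt_1_nat by blast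
  ultimately show ?case by (auto simp del: power_Suc)
qed simp

lemma pderiv_fseq:
  "pderiv (fseq e (Suc m) :: 'p::prime_card mod_ring poly) =
     smult ((- of_nat e) ^ m) ((\<Prod>i<m. fseq e (Suc i)) ^ (e - 1))"
proof (induction m)
  case 0
  then show ?case by (simp add: pderiv_pCons)
next
  case (Suc m)
  let ?f = "fseq e (Suc m) :: 'p mod_ring poly"
  have "of_nat (CARD('p) ^ Suc m) = (0::'p mod_ring)"
    by (simp del: power_Suc add: of_nat_power)
  then have "pderiv (fseq e (Suc (Suc m)) :: 'p mod_ring poly) = - pderiv (?f ^ e)"
    by (simp add: pderiv_diff pderiv_monom del: power_Suc)
  also have "\<dots> = - smult (of_nat e) (?f ^ (e - 1) * pderiv ?f)" by (simp add: pderiv_power)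
  also have "\<dots> = smult ((- of_nat e) ^ Suc m) ((\<Prod>i<Suc m. fseq e (Suc i)) ^ (e - 1))"
    by (simp add: Suc power_mult_distrib algebra_simps)
  finally show ?case .
qed

lemma fseq_has_new_prime_factor:
  assumes "1 \<le> e" "e < CARD('p)"
  obtains q :: "'p::prime_card mod_ring poly"
  where "prime q" "q dvd fseq e (Suc m)" "\<not> q dvd (\<Prod>i<m. fseq e (Suc i))"
proof -
  let ?g = "fseq e (Suc m) :: 'p mod_ring poly"
  let ?h = "(\<Prod>i<m. fseq e (Suc i)) :: 'p mod_ring poly"
  have nonzero: "\<And>k. (fseq e (Suc k) :: 'p mod_ring poly) \<noteq> 0"
    using fseq_nonzero_degree[OF assms(2)] by blast
  then have "?h \<noteq> 0" by (simp add: prod_zero_iff)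
  have "(of_nat e :: 'p mod_ring) \<noteq> 0"
    using assms of_nat_0_mod_ring_dvd[where 'a='p, of e] dvd_imp_le[of "CARD('p)" e] by auto
  have "?h * pderiv ?g = smult ((- of_nat e) ^ m) (?h ^ e)"
    using assms by (cases e) (auto simp: pderiv_fseq mult_ac)
  moreover have "degree ?h = (\<Sum>i<m. CARD('p) ^ i)"
    using nonzero fseq_nonzero_degree[OF assms(2)] by (simp add: degree_prod_eq_sum_degree)
  ultimately have "?h * pderiv ?g \<noteq> 0" "degree (?h * pderiv ?g) = e * (\<Sum>i<m. CARD('p) ^ i)"
    using \<open>?h \<noteq> 0\<close> \<open>of_nat e \<noteq> 0\<close> by (simp_all add: degree_power_eq)
  moreover have "e * (\<Sum>i<m. CARD('p) ^ i) < degree ?g"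
    using geometric_sum_mult_less_power[OF assms(2)] fseq_nonzero_degree[OF assms(2)] by simp
  ultimately have "\<not> ?g dvd ?h * pderiv ?g" by (metis dvd_imp_degree_le not_le)
  then show ?thesis
    using that dvd_mult_pderiv_if_prime_factors_dvd[OF nonzero] by blast
qed

theorem lemma5p4:
  fixes e :: nat
  assumes "1 \<le> e" and "e < CARD('p::prime_card)"
  shows "\<exists>N. \<forall>n\<ge>N. \<exists>P :: 'p mod_ring poly set.
           is_prime_ideal P \<and> P \<noteq> {0} \<and> fseq e n \<in> P \<and>
           (\<forall>j. 1 \<le> j \<and> j < n \<longrightarrow> fseq e j \<notin> P)"
proof (intro exI[of _ 1] allI impI)
  fix n :: nat assume "1 \<le> n"
  then obtain m where n: "n = Suc m" by (cases n) auto
  obtain q :: "'p mod_ring poly"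
    where q: "prime q" "q dvd fseq e (Suc m)" "\<not> q dvd (\<Prod>i<m. fseq e (Suc i))"
    using fseq_has_new_prime_factor[OF assms] .
  have "fseq e j dvd (\<Prod>i<m. fseq e (Suc i))" if "1 \<le> j" "j < n" for j
  proof -
    have "j = Suc (j - 1)" "j - 1 < m" using that n by auto
    then show ?thesis by (metis dvd_prodI finite_lessThan lessThan_iff)
  qed
  then have "\<forall>j. 1 \<le> j \<and> j < n \<longrightarrow> fseq e j \<notin> {x. q dvd x}"
    using q(3) dvd_trans by blast
  moreover have "{x. q dvd x} \<noteq> {0}"
    using q(1) by (metis dvd_refl mem_Collect_eq not_prime_0 singletonD)
  moreover have "is_prime_ideal {x. q dvd x}"
    using q(1) by (simp add: is_prime_ideal_multiples)
  moreover have "fseq e n \<in> {x. q dvd x}" using q(2) n by simp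
  ultimately show "\<exists>P :: 'p mod_ring poly set. is_prime_ideal P \<and> P \<noteq> {0} \<and> fseq e n \<in> P \<and>
           (\<forall>j. 1 \<le> j \<and> j < n \<longrightarrow> fseq e j \<notin> P)"
    by blast
qed

end
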